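(* Let $P$ and $U$ be finite sets of points in $\mathbb{R}^d$ with $|P|=n_{\mathrm p}$, $|U|=n_{\mathrm u}$, let $\pi\in(0,1)$, $w_{\mathrm p}=\pi/n_{\mathrm p}$, $w_{\mathrm u}=1/n_{\mathrm u}$, and let $P'\subseteq P$, $U'\subseteq U$, not both empty. Let $W_{\mathrm p}=|P'|w_{\mathrm p}$ and $W_{\mathrm n}=|U'|w_{\mathrm u}-|P'|w_{\mathrm p}$. Let $\ell(v,y)=1/(1+\exp(vy))$ be the sigmoid loss and $$\hat R_{\mathrm{uPU}}(v;P',U')=\sum_{\mathbf{x}\in P'}w_{\mathrm p}\ell(v,+1)-\sum_{\mathbf{x}\in P'}w_{\mathrm p}\ell(v,-1)+\sum_{\mathbf{x}\in U'}w_{\mathrm u}\ell(v,-1).$$ Then $$\inf_{v\in\mathbb{R}}\hat R_{\mathrm{uPU}}(v;P',U')=\min\{W_{\mathrm p},W_{\mathrm n}\}.$$ *)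

theory Defs
  imports "HOL-Analysis.Analysis"
begin

definition sigmoid_loss :: "real \<Rightarrow> real \<Rightarrow> real" where
  "sigmoid_loss v y = 1 / (1 + exp (v * y))"

definition R_uPU :: "real \<Rightarrow> real \<Rightarrow> real \<Rightarrow> 'a set \<Rightarrow> 'a set \<Rightarrow> real" where
  "R_uPU wp wu v P' U' =
     (\<Sum>x\<in>P'. wp * sigmoid_loss v 1) - (\<Sum>x\<in>P'. wp * sigmoid_loss v (-1))
     + (\<Sum>x\<in>U'. wu * sigmoid_loss v (-1))"

end

theory Submission
  imports Defs "HOL-Real_Asymp.Real_Asymp"
begin

text \<open>Since \<open>\<ell>(v,-1) = 1 - \<ell>(v,+1)\<close>, the risk is the convex combination
  \<open>W\<^sub>p s + W\<^sub>n (1 - s)\<close> with weight \<open>s = \<ell>(v,+1) \<in> (0,1)\<close>. As \<open>v\<close> ranges over \<open>\<real>\<close>,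
  \<open>s\<close> sweeps the open interval \<open>(0,1)\<close>, so the infimum is the smaller endpoint value,
  approached but not attained. None of the hypotheses on \<open>P\<close>, \<open>U\<close> and \<open>\<pi>\<close> is needed.\<close>

lemma sigmoid_loss_uminus_one: "sigmoid_loss v (-1) = 1 - sigmoid_loss v 1"
proof -
  have "1 + exp v > 0" by (simp add: add_pos_pos)
  then show ?thesis
    by (simp add: sigmoid_loss_def exp_minus field_simps)
qed

lemma sigmoid_loss_one_bounds: "0 < sigmoid_loss v 1" "sigmoid_loss v 1 < 1"
  by (auto simp: sigmoid_loss_def add_pos_pos)

lemma tendsto_sigmoid_loss_one_at_top: "((\<lambda>v. sigmoid_loss v 1) \<longlongrightarrow> 0) at_top"
  unfolding sigmoid_loss_def by real_asymp

lemma tendsto_sigmoid_loss_one_at_bot: "((\<lambda>v. sigmoid_loss v 1) \<longlongrightarrow> 1) at_bot"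
  unfolding sigmoid_loss_def by real_asymp

lemma R_uPU_eq_convex_combination:
  "R_uPU wp wu v P' U' =
     real (card P') * wp * sigmoid_loss v 1
     + (real (card U') * wu - real (card P') * wp) * (1 - sigmoid_loss v 1)"
  unfolding R_uPU_def sigmoid_loss_uminus_one by (simp add: algebra_simps)

lemma INF_convex_combination_eq_min:
  fixes s :: "'a \<Rightarrow> real" and A B :: real
  assumes s_range: "\<And>x. 0 \<le> s x \<and> s x \<le> 1"
    and to_0: "(s \<longlongrightarrow> 0) F" and "F \<noteq> bot"
    and to_1: "(s \<longlongrightarrow> 1) G" and "G \<noteq> bot"
  shows "(INF x. A * s x + B * (1 - s x)) = min A B"
proof -
  define f where "f x = A * s x + B * (1 - s x)" for x
  have lower: "min A B \<le> f x" for x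
  proof -
    have "min A B = min A B * s x + min A B * (1 - s x)"
      by (simp add: algebra_simps)
    also have "\<dots> \<le> f x"
      unfolding f_def using s_range[of x] by (intro add_mono mult_right_mono) auto
    finally show ?thesis .
  qed
  have INF_le: "(INF x. f x) \<le> f x" for x
    using lower by (intro cINF_lower bdd_belowI2) auto
  have "(f \<longlongrightarrow> B) F"
    unfolding f_def using to_0 by (auto intro!: tendsto_eq_intros)
  then have "(INF x. f x) \<le> B"
    using \<open>F \<noteq> bot\<close> INF_le by (intro tendsto_lowerbound) auto
  moreover have "(f \<longlongrightarrow> A) G"
    unfolding f_def using to_1 by (auto intro!: tendsto_eq_intros)
  then have "(INF x. f x) \<le> A"
    using \<open>G \<noteq> bot\<close> INF_le by (intro tendsto_lowerbound) auto
  moreover have "min A B \<le> (INF x. f x)"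
    using lower by (intro cINF_greatest) auto
  ultimately show ?thesis
    unfolding f_def by linarith
qed

theorem proposition5:
  fixes P U P' U' :: "'a::euclidean_space set" and pi :: real
  assumes "finite P" and "finite U"
    and "0 < pi" and "pi < 1"
    and "P' \<subseteq> P" and "U' \<subseteq> U"
    and "\<not> (P' = {} \<and> U' = {})"
  defines "wp \<equiv> pi / real (card P)" and "wu \<equiv> 1 / real (card U)"
  defines "Wp \<equiv> real (card P') * wp"
    and "Wn \<equiv> real (card U') * wu - real (card P') * wp"
  shows "(INF v::real. R_uPU wp wu v P' U') = min Wp Wn"
  unfolding R_uPU_eq_convex_combination Wp_def Wn_def
  using sigmoid_loss_one_bounds tendsto_sigmoid_loss_one_at_top tendsto_sigmoid_loss_one_at_bot
  by (intro INF_convex_combination_eq_min) (auto simp: less_imp_le)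

end
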